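(* Modularity is not relatively monotonic: there exist graphs $G=(V,E)$ and $G'=(V,E')$ on the same node set and clusterings $C,D$ of $V$ such that $G'$ is a $C$-consistent improvement of $G$, $G$ is a $D$-consistent improvement of $G'$, and $Q_{\mathrm{mod}}(G,C)\ge Q_{\mathrm{mod}}(G,D)$, but $Q_{\mathrm{mod}}(G',C)<Q_{\mathrm{mod}}(G',D)$.
   Context: A (symmetric weighted) graph is a pair $G=(V,E)$ of a finite set $V$ and $E:V\times V\to\mathbb{R}_{\ge 0}$ symmetric; self loops allowed. A clustering is a partition of $V$ into nonempty disjoint clusters; write $i\sim_C j$ if $i,j$ lie in the same cluster of $C$. For $c\subseteq V$, $v_c=\sum_{i\in c}\sum_{j\in V}E(i,j)$ and $w_c=\sum_{i,j\in c}E(i,j)$. Modularity: $Q_{\mathrm{mod}}(G,C)=\sum_{c\in C}\left(\frac{w_c}{v_V}-\left(\frac{v_c}{v_V}\right)^2\right)$ (defined when $v_V>0$). A graph $G'=(V,E')$ is a $C$-consistent improvement of $G=(V,E)$ if $E'(i,j)\ge E(i,j)$ whenever $i\sim_C j$ and $E'(i,j)\le E(i,j)$ whenever $i\not\sim_C j$. *)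

theory Defs
  imports Complex_Main "HOL-Library.Disjoint_Sets"
begin

text \<open>The weight function is represented as a total function on the
  vertex type; it is required to vanish outside V x V.\<close>
definition is_graph :: "'a set \<Rightarrow> ('a \<Rightarrow> 'a \<Rightarrow> real) \<Rightarrow> bool" where
  "is_graph V E \<longleftrightarrow> finite V
     \<and> (\<forall>i j. E i j \<ge> 0)
     \<and> (\<forall>i j. E i j = E j i)
     \<and> (\<forall>i j. (i \<notin> V \<or> j \<notin> V) \<longrightarrow> E i j = 0)"

definition is_clustering :: "'a set \<Rightarrow> 'a set set \<Rightarrow> bool" where
  "is_clustering V C \<longleftrightarrow> partition_on V C"

definition same_cluster :: "'a set set \<Rightarrow> 'a \<Rightarrow> 'a \<Rightarrow> bool" where
  "same_cluster C i j \<longleftrightarrow> (\<exists>c\<in>C. i \<in> c \<and> j \<in> c)"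

definition vol :: "'a set \<Rightarrow> ('a \<Rightarrow> 'a \<Rightarrow> real) \<Rightarrow> 'a set \<Rightarrow> real" where
  "vol V E c = (\<Sum>i\<in>c. \<Sum>j\<in>V. E i j)"

definition wgt :: "('a \<Rightarrow> 'a \<Rightarrow> real) \<Rightarrow> 'a set \<Rightarrow> real" where
  "wgt E c = (\<Sum>i\<in>c. \<Sum>j\<in>c. E i j)"

definition Qmod :: "'a set \<Rightarrow> ('a \<Rightarrow> 'a \<Rightarrow> real) \<Rightarrow> 'a set set \<Rightarrow> real" where
  "Qmod V E C = (\<Sum>c\<in>C. wgt E c / vol V E V - (vol V E c / vol V E V)^2)"

definition consistent_improvement ::
  "'a set \<Rightarrow> 'a set set \<Rightarrow> ('a \<Rightarrow> 'a \<Rightarrow> real) \<Rightarrow> ('a \<Rightarrow> 'a \<Rightarrow> real) \<Rightarrow> bool" where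
  "consistent_improvement V C E E' \<longleftrightarrow>
     (\<forall>i\<in>V. \<forall>j\<in>V. (same_cluster C i j \<longrightarrow> E' i j \<ge> E i j)
                  \<and> (\<not> same_cluster C i j \<longrightarrow> E' i j \<le> E i j))"

end

theory Submission
  imports Defs
begin

text \<open>The trivial clustering {V} has modularity 0 in every graph, and G is a {V}-consistent
  improvement of G' exactly when G has pointwise larger weights. So it suffices to find a
  clustering C with Q(G,C) \<ge> 0 and an inter-cluster edge whose deletion makes Q(G',C) negative.
  Deleting the edge between the two singleton clusters {0} and {3} removes only volume outside
  the heavy cluster {1,2}, which then holds so large a share of the total volume that its null-model
  term (v_c/v_V)^2 exceeds its internal weight fraction.\<close>

lemma same_cluster_single: "same_cluster {V} i j \<longleftrightarrow> i \<in> V \<and> j \<in> V"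
  unfolding same_cluster_def by auto

lemma is_clustering_single: "V \<noteq> {} \<Longrightarrow> is_clustering V {V}"
  unfolding is_clustering_def partition_on_def disjoint_def by auto

lemma consistent_improvement_single_iff:
  "consistent_improvement V {V} E E' \<longleftrightarrow> (\<forall>i\<in>V. \<forall>j\<in>V. E i j \<le> E' i j)"
  unfolding consistent_improvement_def same_cluster_single by auto

lemma Qmod_single:
  assumes "vol V E V \<noteq> 0"
  shows "Qmod V E {V} = 0"
  using assms by (simp add: Qmod_def wgt_def vol_def)

lemma consistent_improvement_remove_intercluster:
  assumes "\<And>i j. E' i j \<le> E i j"
    and "\<And>i j. same_cluster C i j \<Longrightarrow> E' i j = E i j"
  shows "consistent_improvement V C E E'"
  using assms unfolding consistent_improvement_def by (metis order_refl)

definition example_graph :: "nat \<Rightarrow> nat \<Rightarrow> real" where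
  "example_graph i j =
     (if i < 4 \<and> j < 4
      then [[0,0,1,2], [0,3,2,0], [1,2,3,0], [2,0,0,0::real]] ! i ! j else 0)"

definition example_graph_cut :: "nat \<Rightarrow> nat \<Rightarrow> real" where
  "example_graph_cut i j = (if {i, j} = {0, 3} then 0 else example_graph i j)"

definition example_clustering :: "nat set set" where
  "example_clustering = {{0}, {1, 2}, {3}}"

lemma is_graph_example_graph: "is_graph {0,1,2,3} example_graph"
  unfolding is_graph_def example_graph_def by (auto simp: less_Suc_eq nth_Cons')

lemma is_graph_example_graph_cut: "is_graph {0,1,2,3} example_graph_cut"
  using is_graph_example_graph unfolding is_graph_def example_graph_cut_def
  by (auto simp: insert_commute doubleton_eq_iff)

lemma is_clustering_example_clustering: "is_clustering {0,1,2,3} example_clustering"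
  unfolding is_clustering_def partition_on_def disjoint_def example_clustering_def by auto

lemma example_graph_cut_le: "example_graph_cut i j \<le> example_graph i j"
  using is_graph_example_graph unfolding example_graph_cut_def is_graph_def by auto

lemma example_graph_cut_same_cluster:
  "same_cluster example_clustering i j \<Longrightarrow> example_graph_cut i j = example_graph i j"
  unfolding example_graph_cut_def same_cluster_def example_clustering_def
  by (auto simp: doubleton_eq_iff)

lemma vol_example_graph: "vol {0,1,2,3} example_graph {0,1,2,3} = 16"
  unfolding vol_def example_graph_def by simp

lemma vol_example_graph_cut: "vol {0,1,2,3} example_graph_cut {0,1,2,3} = 12"
  unfolding vol_def example_graph_cut_def example_graph_def
  by (simp add: doubleton_eq_iff)

lemma Qmod_example_graph: "Qmod {0,1,2,3} example_graph example_clustering = 13 / 128"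
  unfolding Qmod_def example_clustering_def vol_example_graph
  unfolding vol_def wgt_def example_graph_def by (simp add: power2_eq_square)

lemma Qmod_example_graph_cut: "Qmod {0,1,2,3} example_graph_cut example_clustering = - 1 / 72"
  unfolding Qmod_def example_clustering_def vol_example_graph_cut
  unfolding vol_def wgt_def example_graph_cut_def example_graph_def
  by (simp add: doubleton_eq_iff power2_eq_square)

theorem theorem4:
  shows "\<exists>(V :: nat set) E E' C D.
           is_graph V E \<and> is_graph V E' \<and> vol V E V > 0 \<and> vol V E' V > 0
         \<and> is_clustering V C \<and> is_clustering V D
         \<and> consistent_improvement V C E E'
         \<and> consistent_improvement V D E' E
         \<and> Qmod V E C \<ge> Qmod V E D
         \<and> Qmod V E' C < Qmod V E' D"
proof (intro exI conjI)
  let ?V = "{0,1,2,3::nat}"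
  show "is_graph ?V example_graph" "is_graph ?V example_graph_cut"
    by (fact is_graph_example_graph is_graph_example_graph_cut)+
  show "vol ?V example_graph ?V > 0" "vol ?V example_graph_cut ?V > 0"
    unfolding vol_example_graph vol_example_graph_cut by simp_all
  show "is_clustering ?V example_clustering" "is_clustering ?V {?V}"
    by (fact is_clustering_example_clustering) (simp add: is_clustering_single)
  show "consistent_improvement ?V example_clustering example_graph example_graph_cut"
    by (rule consistent_improvement_remove_intercluster)
      (simp_all add: example_graph_cut_le example_graph_cut_same_cluster)
  show "consistent_improvement ?V {?V} example_graph_cut example_graph"
    by (simp add: consistent_improvement_single_iff example_graph_cut_le)
  show "Qmod ?V example_graph example_clustering \<ge> Qmod ?V example_graph {?V}"
    using Qmod_single[of ?V example_graph] vol_example_graph Qmod_example_graph by simp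
  show "Qmod ?V example_graph_cut example_clustering < Qmod ?V example_graph_cut {?V}"
    using Qmod_single[of ?V example_graph_cut] vol_example_graph_cut Qmod_example_graph_cut
    by simp
qed

end
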